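(* Let $(\mathcal A,\mathcal T,(-))$ be a meta-tangible $\mathcal T$-group module triple. Then the relation $\preceq_\circ$ on $\mathcal A$ defined by $b\preceq_\circ b'$ iff $b'=b+c^\circ$ for some $c\in\mathcal A$ is a $\mathcal T$-surpassing relation, and $(\mathcal A,\mathcal T,(-),\preceq_\circ)$ is a (meta-tangible) $\mathcal T$-system.
   Context: $(\mathcal A,+,\mathbb 0)$ commutative monoid, $\mathcal T\subseteq\mathcal A\setminus\{\mathbb 0\}$. A negation map is $(-):\mathcal A\to\mathcal A$ with $(-)(b_1+b_2)=(-)b_1+(-)b_2$, $(-)((-)b)=b$, $(-)\mathbb 0=\mathbb 0$, $(-)\mathcal T\subseteq\mathcal T$. Write $b(-)c:=b+((-)c)$, $b^\circ:=b(-)b$, $\mathcal A^\circ=\{b^\circ:b\in\mathcal A\}$. A $\mathcal T$-triple $(\mathcal A,\mathcal T,(-))$: such data with an action $\mathcal T\times\mathcal A\to\mathcal A$ satisfying $a(b_1+b_2)=ab_1+ab_2$, $a\mathbb 0=\mathbb 0$, $(-)(ab)=((-)a)b=a((-)b)$, with $\mathcal T\cap\mathcal A^\circ=\emptyset$ and every element of $\mathcal A$ a finite sum of elements of $\mathcal T$. It is a $\mathcal T$-group module triple if moreover $\mathcal T$ is a group with identity $\mathbb 1$ whose multiplication is the restriction of the action, $\mathbb 1b=b$ and $(a_1a_2)b=a_1(a_2b)$. Meta-tangible: $a+b\in\mathcal T$ for all $a,b\in\mathcal T$ with $b\neq(-)a$. A $\mathcal T$-surpassing relation $\preceq$ is a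 reflexive transitive relation on $\mathcal A$ with: (i) $b\preceq b+c^\circ$ for all $b,c$; (ii) $b_1\preceq b_2\Rightarrow(-)b_1\preceq(-)b_2$; (iii) $b_1\preceq b_2,\ b_1'\preceq b_2'\Rightarrow b_1+b_1'\preceq b_2+b_2'$; (iv) $a\in\mathcal T$, $b_1\preceq b_2\Rightarrow ab_1\preceq ab_2$; (v) $a\preceq b$ with $a,b\in\mathcal T$ implies $a=b$; (vi) $b^\circ\not\preceq a$ for all $b\in\mathcal A$, $a\in\mathcal T$. A $\mathcal T$-system is $(\mathcal A,\mathcal T,(-),\preceq)$ with $(\mathcal A,\mathcal T,(-))$ a $\mathcal T$-triple, $\preceq$ a $\mathcal T$-surpassing relation, and such that $\mathbb 0\preceq a+b$ with $a,b\in\mathcal T$ implies $b=(-)a$. *)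

theory Defs
  imports Main
begin

text \<open>T is a subset of 'a, neg is the negation map (-), act is the action T x A -> A
  (given as a total function, constrained only for first argument in T).\<close>

definition negation_map :: "'a::comm_monoid_add set \<Rightarrow> ('a \<Rightarrow> 'a) \<Rightarrow> bool" where
  "negation_map T neg \<longleftrightarrow>
     (\<forall>b1 b2. neg (b1 + b2) = neg b1 + neg b2) \<and>
     (\<forall>b. neg (neg b) = b) \<and>
     neg 0 = 0 \<and>
     neg ` T \<subseteq> T"

definition circ :: "('a::comm_monoid_add \<Rightarrow> 'a) \<Rightarrow> 'a \<Rightarrow> 'a" where
  "circ neg b = b + neg b"

definition circ_set :: "('a::comm_monoid_add \<Rightarrow> 'a) \<Rightarrow> 'a set" where
  "circ_set neg = {circ neg b | b. True}"

definition T_triple :: "'a::comm_monoid_add set \<Rightarrow> ('a \<Rightarrow> 'a) \<Rightarrow> ('a \<Rightarrow> 'a \<Rightarrow> 'a) \<Rightarrow> bool" where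
  "T_triple T neg act \<longleftrightarrow>
     0 \<notin> T \<and>
     negation_map T neg \<and>
     (\<forall>a\<in>T. \<forall>b1 b2. act a (b1 + b2) = act a b1 + act a b2) \<and>
     (\<forall>a\<in>T. act a 0 = 0) \<and>
     (\<forall>a\<in>T. \<forall>b. neg (act a b) = act (neg a) b \<and> neg (act a b) = act a (neg b)) \<and>
     T \<inter> circ_set neg = {} \<and>
     (\<forall>b. \<exists>xs. set xs \<subseteq> T \<and> b = sum_list xs)"

definition T_group_module_triple ::
  "'a::comm_monoid_add set \<Rightarrow> ('a \<Rightarrow> 'a) \<Rightarrow> ('a \<Rightarrow> 'a \<Rightarrow> 'a) \<Rightarrow> 'a \<Rightarrow> bool" where
  "T_group_module_triple T neg act one \<longleftrightarrow>
     T_triple T neg act \<and>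
     one \<in> T \<and>
     (\<forall>a1\<in>T. \<forall>a2\<in>T. act a1 a2 \<in> T) \<and>
     (\<forall>a\<in>T. act a one = a \<and> act one a = a) \<and>
     (\<forall>a\<in>T. \<exists>a'\<in>T. act a a' = one \<and> act a' a = one) \<and>
     (\<forall>b. act one b = b) \<and>
     (\<forall>a1\<in>T. \<forall>a2\<in>T. \<forall>b. act (act a1 a2) b = act a1 (act a2 b))"

definition meta_tangible :: "'a::comm_monoid_add set \<Rightarrow> ('a \<Rightarrow> 'a) \<Rightarrow> bool" where
  "meta_tangible T neg \<longleftrightarrow> (\<forall>a\<in>T. \<forall>b\<in>T. b \<noteq> neg a \<longrightarrow> a + b \<in> T)"

definition T_surpassing ::
  "('a::comm_monoid_add \<Rightarrow> 'a \<Rightarrow> bool) \<Rightarrow> 'a set \<Rightarrow> ('a \<Rightarrow> 'a) \<Rightarrow> ('a \<Rightarrow> 'a \<Rightarrow> 'a) \<Rightarrow> bool" where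
  "T_surpassing r T neg act \<longleftrightarrow>
     reflp r \<and> transp r \<and>
     (\<forall>b c. r b (b + circ neg c)) \<and>
     (\<forall>b1 b2. r b1 b2 \<longrightarrow> r (neg b1) (neg b2)) \<and>
     (\<forall>b1 b2 b1' b2'. r b1 b2 \<longrightarrow> r b1' b2' \<longrightarrow> r (b1 + b1') (b2 + b2')) \<and>
     (\<forall>a\<in>T. \<forall>b1 b2. r b1 b2 \<longrightarrow> r (act a b1) (act a b2)) \<and>
     (\<forall>a\<in>T. \<forall>b\<in>T. r a b \<longrightarrow> a = b) \<and>
     (\<forall>b. \<forall>a\<in>T. \<not> r (circ neg b) a)"

definition T_system ::
  "'a::comm_monoid_add set \<Rightarrow> ('a \<Rightarrow> 'a) \<Rightarrow> ('a \<Rightarrow> 'a \<Rightarrow> 'a) \<Rightarrow> ('a \<Rightarrow> 'a \<Rightarrow> bool) \<Rightarrow> bool" where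
  "T_system T neg act r \<longleftrightarrow>
     T_triple T neg act \<and> T_surpassing r T neg act \<and>
     (\<forall>a\<in>T. \<forall>b\<in>T. r 0 (a + b) \<longrightarrow> b = neg a)"

definition circ_rel :: "('a::comm_monoid_add \<Rightarrow> 'a) \<Rightarrow> 'a \<Rightarrow> 'a \<Rightarrow> bool" where
  "circ_rel neg b b' \<longleftrightarrow> (\<exists>c. b' = b + circ neg c)"

end

theory Submission
  imports Defs
begin

text \<open>Everything rests on two facts: quasi-zeros \<open>c\<^sup>\<circ>\<close> are closed under addition, negation
  and the \<open>\<T>\<close>-action, which makes \<open>\<preceq>\<^sub>\<circ>\<close> a compatible preorder; and they are never tangible.
  For tangible \<open>a \<preceq>\<^sub>\<circ> b\<close> with \<open>a \<noteq> b\<close>, the element \<open>b (-) a\<close> is the quasi-zero \<open>(a + c)\<^sup>\<circ>\<close>,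
  yet meta-tangibility makes it tangible; the same clash shows \<open>\<zero> \<preceq>\<^sub>\<circ> a + b\<close> forces \<open>b = (-)a\<close>.\<close>

lemma circ_zero:
  assumes "negation_map T neg"
  shows "circ neg 0 = 0"
  using assms unfolding negation_map_def circ_def by simp

lemma circ_add:
  assumes "negation_map T neg"
  shows "circ neg (x + y) = circ neg x + circ neg y"
  using assms unfolding negation_map_def circ_def by (simp add: add_ac)

lemma neg_circ:
  assumes "negation_map T neg"
  shows "neg (circ neg x) = circ neg x"
  using assms unfolding negation_map_def circ_def by (simp add: add.commute)

lemma T_triple_negation_map: "T_triple T neg act \<Longrightarrow> negation_map T neg"
  unfolding T_triple_def by simp

lemma T_triple_act_circ:
  assumes "T_triple T neg act" and "a \<in> T"
  shows "act a (circ neg x) = circ neg (act a x)"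
  using assms unfolding T_triple_def circ_def by metis

lemma T_triple_act_add:
  assumes "T_triple T neg act" and "a \<in> T"
  shows "act a (x + y) = act a x + act a y"
  using assms unfolding T_triple_def by blast

lemma T_triple_circ_notin:
  assumes "T_triple T neg act"
  shows "circ neg x \<notin> T"
  using assms unfolding T_triple_def circ_set_def by blast

lemma T_group_module_triple_T_triple:
  "T_group_module_triple T neg act one \<Longrightarrow> T_triple T neg act"
  unfolding T_group_module_triple_def by simp

lemma meta_tangible_add:
  "meta_tangible T neg \<Longrightarrow> a \<in> T \<Longrightarrow> b \<in> T \<Longrightarrow> b \<noteq> neg a \<Longrightarrow> a + b \<in> T"
  unfolding meta_tangible_def by blast

lemma circ_rel_refl:
  assumes "negation_map T neg"
  shows "reflp (circ_rel neg)"
  unfolding reflp_def circ_rel_def by (metis add_0_right circ_zero[OF assms])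

lemma circ_rel_trans:
  assumes "negation_map T neg"
  shows "transp (circ_rel neg)"
  unfolding transp_def circ_rel_def by (metis add.assoc circ_add[OF assms])

lemma circ_rel_add_circ: "circ_rel neg b (b + circ neg c)"
  unfolding circ_rel_def by blast

lemma circ_rel_neg:
  assumes "negation_map T neg" and "circ_rel neg b1 b2"
  shows "circ_rel neg (neg b1) (neg b2)"
proof -
  obtain c where "b2 = b1 + circ neg c"
    using assms(2) unfolding circ_rel_def by blast
  moreover have "neg (x + y) = neg x + neg y" for x y
    using assms(1) unfolding negation_map_def by blast
  ultimately have "neg b2 = neg b1 + circ neg c"
    using neg_circ[OF assms(1)] by simp
  then show ?thesis unfolding circ_rel_def by blast
qed

lemma circ_rel_add:
  assumes "negation_map T neg" and "circ_rel neg b1 b2" and "circ_rel neg b1' b2'"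
  shows "circ_rel neg (b1 + b1') (b2 + b2')"
  using assms(2,3) unfolding circ_rel_def by (metis add.assoc add.commute circ_add[OF assms(1)])

lemma circ_rel_act:
  assumes "T_triple T neg act" and "a \<in> T" and "circ_rel neg b1 b2"
  shows "circ_rel neg (act a b1) (act a b2)"
proof -
  obtain c where "b2 = b1 + circ neg c"
    using assms(3) unfolding circ_rel_def by blast
  then have "act a b2 = act a b1 + circ neg (act a c)"
    using T_triple_act_add[OF assms(1,2)] T_triple_act_circ[OF assms(1,2)] by simp
  then show ?thesis unfolding circ_rel_def by blast
qed

lemma circ_rel_circ_notin:
  assumes "T_triple T neg act" and "circ_rel neg (circ neg b) a"
  shows "a \<notin> T"
  using assms T_triple_circ_notin circ_add[OF T_triple_negation_map[OF assms(1)]]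
  unfolding circ_rel_def by metis

lemma circ_rel_tangible_eq:
  assumes tr: "T_triple T neg act" and mt: "meta_tangible T neg"
    and "a \<in> T" and "b \<in> T" and "circ_rel neg a b"
  shows "a = b"
proof (rule ccontr)
  assume "a \<noteq> b"
  have nm: "negation_map T neg" using tr by (rule T_triple_negation_map)
  then have "neg a \<noteq> neg b" and "neg a \<in> T"
    using \<open>a \<noteq> b\<close> \<open>a \<in> T\<close> unfolding negation_map_def by (metis, blast)
  then have "b + neg a \<in> T"
    using meta_tangible_add[OF mt \<open>b \<in> T\<close>] by simp
  moreover obtain c where "b = a + circ neg c"
    using assms(5) unfolding circ_rel_def by blast
  then have "b + neg a = circ neg (a + c)"
    unfolding circ_add[OF nm] by (simp add: circ_def add_ac)
  ultimately show False using T_triple_circ_notin[OF tr] by metis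
qed

lemma T_surpassing_circ_rel:
  assumes "T_triple T neg act" and "meta_tangible T neg"
  shows "T_surpassing (circ_rel neg) T neg act"
proof -
  have nm: "negation_map T neg" using assms(1) by (rule T_triple_negation_map)
  show ?thesis
    unfolding T_surpassing_def
    using circ_rel_refl[OF nm] circ_rel_trans[OF nm] circ_rel_add_circ
      circ_rel_neg[OF nm] circ_rel_add[OF nm] circ_rel_act[OF assms(1)]
      circ_rel_tangible_eq[OF assms] circ_rel_circ_notin[OF assms(1)]
    by blast
qed

lemma circ_rel_zero_tangible_sum:
  assumes "T_triple T neg act" and "meta_tangible T neg"
    and "a \<in> T" and "b \<in> T" and "circ_rel neg 0 (a + b)"
  shows "b = neg a"
proof -
  obtain c where "a + b = circ neg c"
    using assms(5) unfolding circ_rel_def by auto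
  then show ?thesis
    using meta_tangible_add[OF assms(2-4)] T_triple_circ_notin[OF assms(1)] by metis
qed

lemma T_system_circ_rel:
  assumes "T_triple T neg act" and "meta_tangible T neg"
  shows "T_system T neg act (circ_rel neg)"
  using assms T_surpassing_circ_rel circ_rel_zero_tangible_sum
  unfolding T_system_def by blast

theorem theorem7p35:
  fixes T :: "'a::comm_monoid_add set" and neg :: "'a \<Rightarrow> 'a"
    and act :: "'a \<Rightarrow> 'a \<Rightarrow> 'a" and one :: 'a
  assumes "T_group_module_triple T neg act one"
    and "meta_tangible T neg"
  shows "T_surpassing (circ_rel neg) T neg act \<and> T_system T neg act (circ_rel neg)
         \<and> meta_tangible T neg"
proof -
  have "T_triple T neg act"
    using assms(1) by (rule T_group_module_triple_T_triple)
  then show ?thesis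
    using assms(2) T_surpassing_circ_rel T_system_circ_rel by blast
qed

end
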